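(* Fix $q\in[0,1)$. For $n\in\mathbb{N}$ let $\Pi_n$ be $\pi_{n,q}$-distributed and let $\Pi_\infty$ be a Mallows permutation on $\mathbb{N}$ with parameter $q$. Then $\mathrm{BST}(\Pi_n)$ converges to $\mathrm{BST}(\Pi_\infty)$ in the rooted topology: for every $r\ge1$ and every finite rooted tree $t$, $$\mathbb{P}\big(B_r(\varnothing,\mathrm{BST}(\Pi_n))\equiv t\big)\longrightarrow\mathbb{P}\big(B_r(\varnothing,\mathrm{BST}(\Pi_\infty))\equiv t\big)\quad(n\to\infty).$$
   Context: $\pi_{n,q}(\sigma)=q^{\mathrm{Inv}(\sigma)}/Z_{n,q}$ on $S_n$, $\mathrm{Inv}(\sigma)=|\{i<j:\sigma(i)>\sigma(j)\}|$, $0^0=1$. A Mallows permutation on $\mathbb{N}$ with parameter $q$ is the permutation $(I_1,I_2,\dots)$ of $\mathbb{N}$ where, for independent Bernoulli$(1-q)$ variables $(B_{i,j})_{i,j\ge1}$, $I_i=\min\{j\notin\{I_1,\dots,I_{i-1}\}:B_{i,j}=1\}$. $\mathbb{T}$ is the set of finite words over $\{0,1\}$ with empty word $\varnothing$ (the root), viewed as a graph with edges $\{w,w0\},\{w,w1\}$; $aS=\{aw:w\in S\}$. For a finite sequence $x=(x_1,\dots,x_n)$ of distinct numbers, $\mathrm{BST}(x)=\emptyset$ if $n=0$, else $\{\varnothing\}\cup0\,\mathrm{BST}(x_-)\cup1\,\mathrm{BST}(x_+)$ with $x_-$ (resp. $x_+$) the subsequence of entries smaller (resp. larger) than $x_1$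 in original order; for infinite $x$, $\mathrm{BST}(x)=\bigcup_n\mathrm{BST}(x_1,\dots,x_n)$; $\mathrm{BST}(\sigma)=\mathrm{BST}(\sigma(1),\sigma(2),\dots)$, seen as an induced subgraph of $\mathbb{T}$. $B_r(v,G)$ is the subgraph of $G$ induced by vertices within graph distance $r$ of $v$, rooted at $v$; $\equiv$ is rooted-graph isomorphism. *)

theory Defs
  imports "HOL-Probability.Probability" "HOL-Combinatorics.Permutations"
begin

definition inv_count :: "nat \<Rightarrow> (nat \<Rightarrow> nat) \<Rightarrow> nat" where
  "inv_count n \<sigma> = card {(i, j). 1 \<le> i \<and> i < j \<and> j \<le> n \<and> \<sigma> j < \<sigma> i}"

definition mallows_Z :: "real \<Rightarrow> nat \<Rightarrow> real" where
  "mallows_Z q n = (\<Sum>\<sigma> | \<sigma> permutes {1..n}. q ^ inv_count n \<sigma>)"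

definition mallows_prob :: "real \<Rightarrow> nat \<Rightarrow> ((nat \<Rightarrow> nat) \<Rightarrow> bool) \<Rightarrow> real" where
  "mallows_prob q n P =
     (\<Sum>\<sigma> | \<sigma> permutes {1..n} \<and> P \<sigma>. q ^ inv_count n \<sigma>) / mallows_Z q n"

section \<open>Binary search trees as sets of words over {0,1} (False = 0, True = 1)\<close>

function bst :: "nat list \<Rightarrow> bool list set" where
  "bst [] = {}"
| "bst (x # xs) = {[]} \<union> Cons False ` bst (filter (\<lambda>y. y < x) xs)
                       \<union> Cons True ` bst (filter (\<lambda>y. x < y) xs)"
  by pat_completeness auto
termination
  by (relation "Wellfounded.measure length") (auto simp: le_imp_less_Suc)

definition bst_perm :: "nat \<Rightarrow> (nat \<Rightarrow> nat) \<Rightarrow> bool list set" where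
  "bst_perm n \<sigma> = bst (map \<sigma> [1..<Suc n])"

text \<open>First i values I_1,...,I_i built from the Bernoulli array B.\<close>
primrec mallows_list :: "(nat \<times> nat \<Rightarrow> bool) \<Rightarrow> nat \<Rightarrow> nat list" where
  "mallows_list B 0 = []"
| "mallows_list B (Suc i) =
     mallows_list B i @ [LEAST j. 1 \<le> j \<and> j \<notin> set (mallows_list B i) \<and> B (Suc i, j)]"

definition bst_inf :: "(nat \<times> nat \<Rightarrow> bool) \<Rightarrow> bool list set" where
  "bst_inf B = (\<Union>n. bst (mallows_list B n))"

definition bern_array :: "real \<Rightarrow> (nat \<times> nat \<Rightarrow> bool) measure" where
  "bern_array q = (\<Pi>\<^sub>M ij\<in>UNIV. measure_pmf (bernoulli_pmf (1 - q)))"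

definition tadj :: "bool list \<Rightarrow> bool list \<Rightarrow> bool" where
  "tadj u w \<longleftrightarrow> (\<exists>b. w = u @ [b]) \<or> (\<exists>b. u = w @ [b])"

inductive walk_in :: "bool list set \<Rightarrow> nat \<Rightarrow> bool list \<Rightarrow> bool list \<Rightarrow> bool"
  for V where
  "u \<in> V \<Longrightarrow> walk_in V 0 u u"
| "walk_in V k u x \<Longrightarrow> tadj x w \<Longrightarrow> w \<in> V \<Longrightarrow> walk_in V (Suc k) u w"

definition ball_verts :: "nat \<Rightarrow> bool list \<Rightarrow> bool list set \<Rightarrow> bool list set" where
  "ball_verts r v V = {w. \<exists>k\<le>r. walk_in V k v w}"

definition finite_rooted_tree :: "'a set \<Rightarrow> ('a \<times> 'a) set \<Rightarrow> 'a \<Rightarrow> bool" where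
  "finite_rooted_tree T E \<rho> \<longleftrightarrow>
     finite T \<and> \<rho> \<in> T \<and> E \<subseteq> T \<times> T \<and> sym E \<and> irrefl E \<and>
     (\<forall>v\<in>T. (\<rho>, v) \<in> E\<^sup>*) \<and>
     card {{u, v} | u v. (u, v) \<in> E} + 1 = card T"

text \<open>Rooted isomorphism between B_r(v, G) (G induced subgraph of the binary tree on V)
  and the rooted graph (T, E, rho).\<close>
definition ball_iso :: "nat \<Rightarrow> bool list \<Rightarrow> bool list set \<Rightarrow> 'a set \<Rightarrow> ('a \<times> 'a) set \<Rightarrow> 'a \<Rightarrow> bool" where
  "ball_iso r v V T E \<rho> \<longleftrightarrow>
     (\<exists>f. bij_betw f (ball_verts r v V) T \<and> f v = \<rho> \<and>
          (\<forall>x\<in>ball_verts r v V. \<forall>y\<in>ball_verts r v V. tadj x y \<longleftrightarrow> (f x, f y) \<in> E))"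

end

theory Submission
  imports Defs "HOL-Combinatorics.Multiset_Permutations"
begin

text \<open>Take \<open>\<Pi>\<^sub>n\<close> to be the relative order of the first \<open>n\<close> values \<open>I\<^sub>1, ..., I\<^sub>n\<close> of the
  Mallows permutation of \<open>\<nat>\<close> built from the Bernoulli array. This coupling is legitimate:
  the event that \<open>I\<^sub>1, ..., I\<^sub>N\<close> is a given injective list \<open>a\<close> is a cylinder of probability
  \<open>(1 - q)\<^sup>N q\<^sup>g\<close>, where the number \<open>g\<close> of failed trials is the number of inversions of \<open>a\<close>
  plus a quantity depending only on the set of values of \<open>a\<close>. Summing over the lists with values
  in \<open>{1..M}\<close> therefore factorizes into a weight of the value set times the Mallows weight of the
  pattern, and since the total mass of these lists tends to \<open>1\<close> as \<open>M \<rightarrow> \<infinity>\<close>, the law of the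
  pattern is squeezed to \<open>\<pi>\<^sub>N\<^sub>,\<^sub>q\<close>. A binary search tree only depends on the relative order of
  the sequence, and the ball of radius \<open>r\<close> at the root of the (prefix-closed) tree is its finite
  set of words of length at most \<open>r\<close>. Along the increasing trees \<open>BST(I\<^sub>1, ..., I\<^sub>n)\<close> this set
  is eventually that of \<open>BST(\<Pi>\<^sub>\<infinity>)\<close>, and dominated convergence concludes.\<close>

section \<open>Binary search trees and their balls at the root\<close>

definition prefix_closed :: "bool list set \<Rightarrow> bool" where
  "prefix_closed V \<longleftrightarrow> (\<forall>w b. w @ [b] \<in> V \<longrightarrow> w \<in> V)"

lemma prefix_closed_bst: "prefix_closed (bst xs)"
  unfolding prefix_closed_def
proof (induction xs rule: bst.induct)
  case (2 x xs)
  show ?case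
  proof (intro allI impI)
    fix w b assume "w @ [b] \<in> bst (x # xs)"
    then show "w \<in> bst (x # xs)"
      using 2 by (cases w) (auto simp: Cons_eq_append_conv)
  qed
qed simp

lemma bst_subset_bst_append: "bst xs \<subseteq> bst (xs @ ys)"
proof (induction xs arbitrary: ys rule: bst.induct)
  case (2 x xs)
  show ?case
    using "2.IH"(1)[of "filter (\<lambda>y. y < x) ys"] "2.IH"(2)[of "filter (\<lambda>y. x < y) ys"] by auto
qed simp

lemma bst_map_strict_mono:
  assumes "strict_mono_on (set xs) f"
  shows "bst (map f xs) = bst xs"
  using assms
proof (induction xs rule: bst.induct)
  case (2 x xs)
  have iff: "f y < f x \<longleftrightarrow> y < x" "f x < f y \<longleftrightarrow> x < y" if "y \<in> set xs" for y
    using "2.prems" that by (auto simp: strict_mono_on_less)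
  have "filter (\<lambda>y. y < f x) (map f xs) = map f (filter (\<lambda>y. y < x) xs)"
       "filter (\<lambda>y. f x < y) (map f xs) = map f (filter (\<lambda>y. x < y) xs)"
    using iff by (simp_all add: filter_map comp_def cong: filter_cong)
  moreover have "strict_mono_on (set (filter P xs)) f" for P
    using "2.prems" by (auto simp: strict_mono_on_def)
  ultimately show ?case
    using "2.IH" by simp
qed simp

lemma walk_in_mem_length: "walk_in V k u w \<Longrightarrow> w \<in> V \<and> length w \<le> length u + k"
  by (induction rule: walk_in.induct) (auto simp: tadj_def)

lemma walk_in_from_root:
  assumes "prefix_closed V" "w \<in> V"
  shows "walk_in V (length w) [] w"
  using assms(2)
proof (induction w rule: rev_induct)
  case Nil
  then show ?case by (simp add: walk_in.intros(1))
next
  case (snoc b w)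
  have "w \<in> V"
    using snoc.prems assms(1) by (auto simp: prefix_closed_def)
  moreover have "tadj w (w @ [b])"
    by (simp add: tadj_def)
  ultimately show ?case
    using snoc walk_in.intros(2) by fastforce
qed

lemma ball_verts_root:
  assumes "prefix_closed V"
  shows "ball_verts r [] V = V \<inter> {w. length w \<le> r}"
  using walk_in_mem_length walk_in_from_root[OF assms] unfolding ball_verts_def by fastforce

lemma ball_iso_root_cong:
  assumes "prefix_closed V" "prefix_closed V'"
    and "V \<inter> {w. length w \<le> r} = V' \<inter> {w. length w \<le> r}"
  shows "ball_iso r [] V T E \<rho> \<longleftrightarrow> ball_iso r [] V' T E \<rho>"
  using assms by (simp add: ball_iso_def ball_verts_root)

section \<open>Inversions and rejection counts of injective lists\<close>

definition list_inversions :: "nat list \<Rightarrow> nat" where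
  "list_inversions xs = card {(i, j). i < j \<and> j < length xs \<and> xs ! j < xs ! i}"

definition distinct_lists :: "nat \<Rightarrow> nat \<Rightarrow> nat list set" where
  "distinct_lists M N = {a. distinct a \<and> set a \<subseteq> {1..M} \<and> length a = N}"

text \<open>If the first values of the Mallows permutation are \<open>a\<close>, then \<open>a ! i\<close> is chosen after a
  failed Bernoulli trial at every free value below it; \<open>rejections a\<close> counts these failures.\<close>
definition rejections :: "nat list \<Rightarrow> nat" where
  "rejections a = (\<Sum>i<length a. card ({1..<a ! i} - set (take i a)))"

definition gap_count :: "nat set \<Rightarrow> nat" where
  "gap_count S = (\<Sum>x\<in>S. card ({1..<x} - S))"

lemma rejections_snoc: "rejections (a @ [v]) = rejections a + card ({1..<v} - set a)"
  unfolding rejections_def by (simp add: nth_append)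

lemma list_inversions_snoc:
  assumes "distinct a"
  shows "list_inversions (a @ [v]) = list_inversions a + card {x \<in> set a. v < x}"
proof -
  let ?P = "{(i, j). i < j \<and> j < length a \<and> a ! j < a ! i}"
  let ?Q = "{i. i < length a \<and> v < a ! i}"
  have split: "{(i, j). i < j \<and> j < length (a @ [v]) \<and> (a @ [v]) ! j < (a @ [v]) ! i}
      = ?P \<union> (\<lambda>i. (i, length a)) ` ?Q"
    by (auto simp: nth_append less_Suc_eq)
  have "finite ?P"
    by (rule finite_subset[of _ "{..<length a} \<times> {..<length a}"]) auto
  moreover have "card ((\<lambda>i. (i, length a)) ` ?Q) = card ?Q"
    by (rule card_image) (auto simp: inj_on_def)
  moreover have "bij_betw (\<lambda>i. a ! i) ?Q {x \<in> set a. v < x}"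
    using assms by (auto simp: bij_betw_def inj_on_def nth_eq_iff_index_eq in_set_conv_nth)
  ultimately show ?thesis
    unfolding list_inversions_def split by (subst card_Un_disjoint) (auto simp: bij_betw_same_card)
qed

lemma gap_count_insert:
  assumes "finite S" "v \<notin> S" "1 \<le> v"
  shows "gap_count (insert v S) + card {x \<in> S. v < x} = gap_count S + card ({1..<v} - S)"
proof -
  have gaps_x: "card ({1..<x} - insert v S) + (if v < x then 1 else 0) = card ({1..<x} - S)"
    if "x \<in> S" for x
  proof (cases "v < x")
    case True
    then have "v \<in> {1..<x} - S"
      using assms by auto
    then have "card ({1..<x} - S) = Suc (card ({1..<x} - S - {v}))"
      by (metis card_Suc_Diff1 finite_Diff finite_atLeastLessThan)
    moreover have "{1..<x} - insert v S = {1..<x} - S - {v}"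
      by auto
    ultimately show ?thesis
      using True by simp
  next
    case False
    then have "{1..<x} - insert v S = {1..<x} - S" by auto
    then show ?thesis using False by simp
  qed
  have "card {x \<in> S. v < x} = (\<Sum>x\<in>S. if v < x then 1 else 0)"
    using assms(1) by (simp add: sum.If_cases Int_def)
  moreover have "{1..<v} - insert v S = {1..<v} - S" by auto
  ultimately have "gap_count (insert v S) + card {x \<in> S. v < x}
      = card ({1..<v} - S) + (\<Sum>x\<in>S. card ({1..<x} - insert v S) + (if v < x then 1 else 0))"
    using assms unfolding gap_count_def by (simp add: sum.distrib)
  then show ?thesis
    using gaps_x by (simp add: gap_count_def)
qed

lemma rejections_eq_inversions_gaps:
  assumes "distinct a" "0 \<notin> set a"
  shows "rejections a = list_inversions a + gap_count (set a)"
  using assms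
proof (induction a rule: rev_induct)
  case Nil
  then show ?case by (simp add: rejections_def list_inversions_def gap_count_def)
next
  case (snoc v a)
  then have "distinct a" "0 \<notin> set a" "v \<notin> set a" "1 \<le> v" by auto
  then show ?case
    using snoc.IH gap_count_insert[of "set a" v] list_inversions_snoc[of a v]
    by (simp add: rejections_snoc)
qed

lemma list_inversions_map_strict_mono:
  assumes "strict_mono_on (set xs) f"
  shows "list_inversions (map f xs) = list_inversions xs"
proof -
  have "f (xs ! j) < f (xs ! i) \<longleftrightarrow> xs ! j < xs ! i" if "i < length xs" "j < length xs" for i j
    using assms that by (simp add: strict_mono_on_less)
  then show ?thesis
    unfolding list_inversions_def by (intro arg_cong[where f = card]) auto
qed

lemma list_inversions_sorted:
  assumes "sorted xs"
  shows "list_inversions xs = 0"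
proof -
  have "\<not> xs ! j < xs ! i" if "i < j" "j < length xs" for i j
    using sorted_nth_mono[OF assms, of i j] that by simp
  then have no_inversions: "{(i, j). i < j \<and> j < length xs \<and> xs ! j < xs ! i} = {}"
    by blast
  show ?thesis
    unfolding list_inversions_def no_inversions by simp
qed

lemma distinct_listsD:
  assumes "a \<in> distinct_lists M N"
  shows "distinct a" "0 \<notin> set a" "length a = N"
  using assms by (auto simp: distinct_lists_def)

lemma finite_distinct_lists: "finite (distinct_lists M N)"
proof (rule finite_subset)
  show "distinct_lists M N \<subseteq> {xs. set xs \<subseteq> {1..M} \<and> length xs = N}"
    unfolding distinct_lists_def by auto
qed (simp add: finite_lists_length_eq)

lemma distinct_lists_Suc:
  "distinct_lists M (Suc N) = (\<lambda>(a, v). a @ [v]) ` (SIGMA a:distinct_lists M N. {1..M} - set a)"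
proof (intro set_eqI iffI)
  fix xs assume xs: "xs \<in> distinct_lists M (Suc N)"
  then obtain a v where "xs = a @ [v]"
    unfolding distinct_lists_def by (metis (mono_tags) length_Suc_conv_rev mem_Collect_eq)
  with xs show "xs \<in> (\<lambda>(a, v). a @ [v]) ` (SIGMA a:distinct_lists M N. {1..M} - set a)"
    unfolding distinct_lists_def by (auto intro!: image_eqI[where x = "(a, v)"])
qed (auto simp: distinct_lists_def)

lemma sum_distinct_lists_Suc:
  "(\<Sum>xs\<in>distinct_lists M (Suc N). g xs) = (\<Sum>a\<in>distinct_lists M N. \<Sum>v\<in>{1..M} - set a. g (a @ [v]))"
proof -
  have "inj_on (\<lambda>(a, v). a @ [v]) (SIGMA a:distinct_lists M N. {1..M} - set a)"
    by (auto simp: inj_on_def)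
  then have "(\<Sum>xs\<in>distinct_lists M (Suc N). g xs)
      = (\<Sum>(a, v)\<in>(SIGMA a:distinct_lists M N. {1..M} - set a). g (a @ [v]))"
    unfolding distinct_lists_Suc by (simp add: sum.reindex case_prod_unfold)
  also have "\<dots> = (\<Sum>a\<in>distinct_lists M N. \<Sum>v\<in>{1..M} - set a. g (a @ [v]))"
    by (rule sum.Sigma[symmetric]) (auto simp: finite_distinct_lists)
  finally show ?thesis .
qed

lemma sum_rank:
  fixes U :: "nat set"
  assumes "finite U"
  shows "(\<Sum>v\<in>U. g (card {u\<in>U. u < v})) = (\<Sum>i<card U. g i)"
  using assms
proof (induction "card U" arbitrary: U)
  case (Suc n)
  define m where "m = Max U"
  have "U \<noteq> {}" using Suc.hyps(2) by auto
  then have m: "m \<in> U" "\<And>u. u \<in> U \<Longrightarrow> u \<le> m"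
    using Suc.prems by (auto simp: m_def)
  define U' where "U' = U - {m}"
  have U': "finite U'" "card U' = n"
    using Suc m by (auto simp: U'_def)
  have "{u\<in>U. u < v} = {u\<in>U'. u < v}" if "v \<in> U'" for v
    using that m(2) by (fastforce simp: U'_def)
  moreover have "{u\<in>U. u < m} = U'"
    using m by (auto simp: U'_def less_le)
  ultimately have "(\<Sum>v\<in>U. g (card {u\<in>U. u < v})) = g n + (\<Sum>v\<in>U'. g (card {u\<in>U'. u < v}))"
    using sum.remove[OF Suc.prems m(1), of "\<lambda>v. g (card {u\<in>U. u < v})"] U'
    by (simp add: U'_def)
  also have "\<dots> = (\<Sum>i<Suc n. g i)"
    using Suc.hyps(1) U' by (simp add: add.commute)
  finally show ?case
    using Suc.hyps(2) by simp
qed simp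

lemma sum_rejections_distinct_lists:
  fixes q :: "'a::comm_semiring_1"
  shows "(\<Sum>a\<in>distinct_lists M N. q ^ rejections a) = (\<Prod>k<N. \<Sum>i<M - k. q ^ i)"
proof (induction N)
  case 0
  have "distinct_lists M 0 = {[]}"
    by (auto simp: distinct_lists_def)
  then show ?case by (simp add: rejections_def)
next
  case (Suc N)
  have step: "(\<Sum>v\<in>{1..M} - set a. q ^ rejections (a @ [v])) = q ^ rejections a * (\<Sum>i<M - N. q ^ i)"
    if a: "a \<in> distinct_lists M N" for a
  proof -
    let ?U = "{1..M} - set a"
    have "card ?U = M - N"
      using a unfolding distinct_lists_def by (simp add: card_Diff_subset distinct_card)
    have "{1..<v} - set a = {u \<in> ?U. u < v}" if "v \<in> ?U" for v
      using that by auto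
    then have "(\<Sum>v\<in>?U. q ^ rejections (a @ [v]))
        = q ^ rejections a * (\<Sum>v\<in>?U. q ^ card {u \<in> ?U. u < v})"
      by (simp add: rejections_snoc power_add sum_distrib_left)
    also have "\<dots> = q ^ rejections a * (\<Sum>i<M - N. q ^ i)"
      using sum_rank[of ?U "\<lambda>i. q ^ i"] \<open>card ?U = M - N\<close> by simp
    finally show ?thesis .
  qed
  have "(\<Sum>a\<in>distinct_lists M (Suc N). q ^ rejections a)
      = (\<Sum>a\<in>distinct_lists M N. q ^ rejections a * (\<Sum>i<M - N. q ^ i))"
    unfolding sum_distinct_lists_Suc by (rule sum.cong[OF refl step])
  also have "\<dots> = (\<Sum>a\<in>distinct_lists M N. q ^ rejections a) * (\<Sum>i<M - N. q ^ i)"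
    by (simp add: sum_distrib_right)
  finally show ?case
    by (simp only: Suc.IH prod.lessThan_Suc)
qed

lemma ex_strict_mono_enumeration:
  fixes S :: "'a::linorder set"
  assumes "finite S" "card S = N"
  obtains g where "bij_betw g {1..N} S" "strict_mono_on {1..N} g"
proof
  let ?l = "sorted_list_of_set S"
  let ?g = "\<lambda>i. ?l ! (i - 1)"
  have l: "length ?l = N" "sorted_wrt (<) ?l" "set ?l = S"
    using assms by (simp_all add: strict_sorted_list_of_set)
  show mono: "strict_mono_on {1..N} ?g"
    by (rule strict_mono_onI) (use l in \<open>auto intro: sorted_wrt_nth_less\<close>)
  have "{1..N} = Suc ` {0..<N}"
    by (simp add: atLeastLessThanSuc_atLeastAtMost)
  then have "?g ` {1..N} = (\<lambda>i. ?l ! i) ` {0..<N}"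
    by (simp only: image_image) simp
  also have "\<dots> = set ?l"
    using l(1) by (auto simp: in_set_conv_nth)
  finally show "bij_betw ?g {1..N} S"
    using strict_mono_on_imp_inj_on[OF mono] l(3) by (simp add: bij_betw_def)
qed

lemma bij_betw_map_permutations_of_set:
  assumes "bij_betw g A B"
  shows "bij_betw (map g) (permutations_of_set A) (permutations_of_set B)"
proof -
  have "inj_on (map g) (permutations_of_set A)"
    using assms by (intro inj_on_mapI)
      (auto simp: bij_betw_def permutations_of_set_def intro: inj_on_subset)
  moreover have "map g ` permutations_of_set A = permutations_of_set B"
    using assms by (auto simp: bij_betw_def permutations_of_set_image_inj[symmetric])
  ultimately show ?thesis
    by (simp add: bij_betw_def)
qed

definition order_invariant :: "(nat list \<Rightarrow> 'a) \<Rightarrow> bool" where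
  "order_invariant h \<longleftrightarrow> (\<forall>\<tau> g. strict_mono_on (set \<tau>) g \<longrightarrow> h (map g \<tau>) = h \<tau>)"

lemma sum_permutations_of_set_relabel:
  assumes "finite S" "card S = N" "order_invariant h"
  shows "(\<Sum>a\<in>permutations_of_set S. h a) = (\<Sum>\<tau>\<in>permutations_of_set {1..N}. h \<tau>)"
proof -
  obtain g where g: "bij_betw g {1..N} S" "strict_mono_on {1..N} g"
    using ex_strict_mono_enumeration[OF assms(1,2)] by blast
  have "(\<Sum>a\<in>permutations_of_set S. h a) = (\<Sum>\<tau>\<in>permutations_of_set {1..N}. h (map g \<tau>))"
    using bij_betw_map_permutations_of_set[OF g(1)] by (rule sum.reindex_bij_betw[symmetric])
  also have "\<dots> = (\<Sum>\<tau>\<in>permutations_of_set {1..N}. h \<tau>)"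
    using g(2) assms(3)
    by (intro sum.cong refl) (simp add: order_invariant_def permutations_of_set_def)
  finally show ?thesis .
qed

definition pattern_weight :: "real \<Rightarrow> nat \<Rightarrow> (nat list \<Rightarrow> bool) \<Rightarrow> real" where
  "pattern_weight q N Q =
     (\<Sum>\<tau>\<in>permutations_of_set {1..N}. if Q \<tau> then q ^ list_inversions \<tau> else 0)"

lemma sum_distinct_lists_rejections_factor:
  fixes q :: real
  assumes "order_invariant Q"
  shows "(\<Sum>a\<in>distinct_lists M N. if Q a then q ^ rejections a else 0)
       = (\<Sum>S | S \<subseteq> {1..M} \<and> card S = N. q ^ gap_count S) * pattern_weight q N Q"
proof -
  let ?Sets = "{S. S \<subseteq> {1..M} \<and> card S = N}"
  let ?h = "\<lambda>a. if Q a then q ^ list_inversions a else 0"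
  have "finite ?Sets"
    by (rule finite_subset[of _ "Pow {1..M}"]) auto
  moreover have "distinct_lists M N = (\<Union>S\<in>?Sets. permutations_of_set S)"
    unfolding distinct_lists_def permutations_of_set_def by (auto simp: distinct_card)
  ultimately have "(\<Sum>a\<in>distinct_lists M N. if Q a then q ^ rejections a else 0)
      = (\<Sum>S\<in>?Sets. \<Sum>a\<in>permutations_of_set S. if Q a then q ^ rejections a else 0)"
    by (simp only:) (rule sum.UNION_disjoint; auto dest: permutations_of_setD)
  also have "\<dots> = (\<Sum>S\<in>?Sets. q ^ gap_count S * pattern_weight q N Q)"
  proof (rule sum.cong[OF refl])
    fix S assume S: "S \<in> ?Sets"
    then have "finite S" "0 \<notin> S"
      using rev_finite_subset[of "{1..M}" S] by auto
    have "(\<Sum>a\<in>permutations_of_set S. if Q a then q ^ rejections a else 0)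
        = (\<Sum>a\<in>permutations_of_set S. q ^ gap_count S * ?h a)"
      using \<open>0 \<notin> S\<close> by (intro sum.cong refl)
        (auto simp: permutations_of_set_def rejections_eq_inversions_gaps power_add)
    also have "\<dots> = q ^ gap_count S * (\<Sum>a\<in>permutations_of_set S. ?h a)"
      by (simp only: sum_distrib_left)
    also have "(\<Sum>a\<in>permutations_of_set S. ?h a) = pattern_weight q N Q"
      unfolding pattern_weight_def using \<open>finite S\<close> S assms
      by (intro sum_permutations_of_set_relabel)
        (auto simp: order_invariant_def list_inversions_map_strict_mono)
    finally show "(\<Sum>a\<in>permutations_of_set S. if Q a then q ^ rejections a else 0)
        = q ^ gap_count S * pattern_weight q N Q" .
  qed
  also have "\<dots> = (\<Sum>S\<in>?Sets. q ^ gap_count S) * pattern_weight q N Q"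
    by (simp only: sum_distrib_right)
  finally show ?thesis .
qed

lemma inv_count_eq_list_inversions: "inv_count N \<sigma> = list_inversions (map \<sigma> [1..<Suc N])"
proof -
  let ?P = "{(i, j). i < j \<and> j < N \<and> \<sigma> (Suc j) < \<sigma> (Suc i)}"
  have "{(i, j). 1 \<le> i \<and> i < j \<and> j \<le> N \<and> \<sigma> j < \<sigma> i} = (\<lambda>(i, j). (Suc i, Suc j)) ` ?P"
  proof (intro set_eqI iffI)
    fix p assume "p \<in> {(i, j). 1 \<le> i \<and> i < j \<and> j \<le> N \<and> \<sigma> j < \<sigma> i}"
    then show "p \<in> (\<lambda>(i, j). (Suc i, Suc j)) ` ?P"
      by (auto intro!: image_eqI[where x = "(fst p - 1, snd p - 1)"])
  qed auto
  moreover have "card ((\<lambda>(i, j). (Suc i, Suc j)) ` ?P) = card ?P"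
    by (rule card_image) (auto simp: inj_on_def)
  moreover have "{(i, j). i < j \<and> j < length (map \<sigma> [1..<Suc N])
      \<and> map \<sigma> [1..<Suc N] ! j < map \<sigma> [1..<Suc N] ! i} = ?P"
    by (auto simp: nth_map_upt add.commute simp del: upt_Suc)
  ultimately show ?thesis
    unfolding inv_count_def list_inversions_def by simp
qed

lemma bij_betw_permutes_list:
  "bij_betw (\<lambda>\<sigma>. map \<sigma> [1..<Suc N]) {\<sigma>. \<sigma> permutes {1..N}} (permutations_of_set {1..N})"
proof -
  let ?f = "\<lambda>\<sigma>. map \<sigma> [1..<Suc N]"
  have set_upt: "set [1..<Suc N] = {1..N}"
    by (simp only: set_upt atLeastLessThanSuc_atLeastAtMost)
  have inj: "inj_on ?f {\<sigma>. \<sigma> permutes {1..N}}"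
  proof (rule inj_onI, rule ext)
    fix \<sigma> \<tau> x assume "\<sigma> \<in> {\<sigma>. \<sigma> permutes {1..N}}" "\<tau> \<in> {\<sigma>. \<sigma> permutes {1..N}}" "?f \<sigma> = ?f \<tau>"
    then have "\<sigma> permutes {1..N}" "\<tau> permutes {1..N}" "\<forall>x\<in>{1..N}. \<sigma> x = \<tau> x"
      by (simp_all only: mem_Collect_eq map_eq_conv set_upt)
    then show "\<sigma> x = \<tau> x"
      by (cases "x \<in> {1..N}") (simp_all add: permutes_not_in)
  qed
  have "?f \<sigma> \<in> permutations_of_set {1..N}" if "\<sigma> permutes {1..N}" for \<sigma>
    using that permutes_inj_on[OF that] unfolding permutations_of_set_def
    by (simp only: mem_Collect_eq set_map set_upt permutes_image distinct_map distinct_upt)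
  then have "?f ` {\<sigma>. \<sigma> permutes {1..N}} \<subseteq> permutations_of_set {1..N}"
    by blast
  moreover have "card (?f ` {\<sigma>. \<sigma> permutes {1..N}}) = card (permutations_of_set {1..N})"
    using inj by (simp add: card_image card_permutations)
  ultimately have "?f ` {\<sigma>. \<sigma> permutes {1..N}} = permutations_of_set {1..N}"
    by (simp add: card_subset_eq)
  then show ?thesis
    using inj by (simp add: bij_betw_def)
qed

definition pattern_prob :: "real \<Rightarrow> nat \<Rightarrow> (nat list \<Rightarrow> bool) \<Rightarrow> real" where
  "pattern_prob q N Q = pattern_weight q N Q / pattern_weight q N (\<lambda>_. True)"

lemma mallows_prob_eq_pattern_prob:
  "mallows_prob q N (\<lambda>\<sigma>. Q (map \<sigma> [1..<Suc N])) = pattern_prob q N Q"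
proof -
  let ?Perms = "{\<sigma>. \<sigma> permutes {1..N}}"
  have weight: "(\<Sum>\<sigma>\<in>?Perms. if R (map \<sigma> [1..<Suc N]) then q ^ inv_count N \<sigma> else 0)
      = pattern_weight q N R" for R
    unfolding pattern_weight_def inv_count_eq_list_inversions
    by (rule sum.reindex_bij_betw[OF bij_betw_permutes_list])
  have "{\<sigma>. \<sigma> permutes {1..N} \<and> Q (map \<sigma> [1..<Suc N])} = {\<sigma> \<in> ?Perms. Q (map \<sigma> [1..<Suc N])}"
    by simp
  then have "(\<Sum>\<sigma> | \<sigma> permutes {1..N} \<and> Q (map \<sigma> [1..<Suc N]). q ^ inv_count N \<sigma>)
      = pattern_weight q N Q"
    using sum.inter_filter[of ?Perms "\<lambda>\<sigma>. q ^ inv_count N \<sigma>" "\<lambda>\<sigma>. Q (map \<sigma> [1..<Suc N])"]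
      weight[of Q] by (simp add: finite_permutations del: upt_Suc)
  moreover have "mallows_Z q N = pattern_weight q N (\<lambda>_. True)"
    using weight[of "\<lambda>_. True"] by (simp add: mallows_Z_def)
  ultimately show ?thesis
    by (simp add: mallows_prob_def pattern_prob_def)
qed

lemma pattern_weight_Not:
  "pattern_weight q N (\<lambda>\<tau>. \<not> Q \<tau>) = pattern_weight q N (\<lambda>_. True) - pattern_weight q N Q"
  unfolding pattern_weight_def sum_subtractf[symmetric] by (intro sum.cong) auto

lemma pattern_weight_True_ge_1:
  assumes "0 \<le> q"
  shows "1 \<le> pattern_weight q N (\<lambda>_. True)"
proof -
  have "[1..<Suc N] \<in> permutations_of_set {1..N}"
    by (simp add: permutations_of_set_def atLeastLessThanSuc_atLeastAtMost del: upt_Suc)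
  moreover have "list_inversions [1..<Suc N] = 0"
    by (simp add: list_inversions_sorted del: upt_Suc)
  ultimately have "1 \<le> (\<Sum>\<tau>\<in>permutations_of_set {1..N}. q ^ list_inversions \<tau>)"
    using assms member_le_sum[of "[1..<Suc N]" "permutations_of_set {1..N}"]
    by (metis finite_permutations_of_set power_0 zero_le_power)
  then show ?thesis
    by (simp add: pattern_weight_def)
qed

lemma pattern_prob_Not:
  assumes "0 \<le> q"
  shows "pattern_prob q N (\<lambda>\<tau>. \<not> Q \<tau>) = 1 - pattern_prob q N Q"
proof -
  have "0 < pattern_weight q N (\<lambda>_. True)"
    using pattern_weight_True_ge_1[OF assms] by (rule less_le_trans[OF zero_less_one])
  then show ?thesis
    by (simp add: pattern_prob_def pattern_weight_Not diff_divide_distrib)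
qed

section \<open>The Bernoulli array and its cylinders\<close>

lemma space_bern_array [simp]: "space (bern_array q) = UNIV"
  by (simp add: bern_array_def space_PiM PiE_def extensional_def)

lemma prob_space_bern_array: "prob_space (bern_array q)"
  unfolding bern_array_def by (rule prob_space_PiM) (simp add: prob_space_measure_pmf)

lemma measurable_bern_array_component [measurable]:
  "(\<lambda>B. B x) \<in> bern_array q \<rightarrow>\<^sub>M count_space UNIV"
proof -
  have "(\<lambda>B. B x) \<in> bern_array q \<rightarrow>\<^sub>M measure_pmf (bernoulli_pmf (1 - q))"
    unfolding bern_array_def by (rule measurable_component_singleton) simp
  then show ?thesis
    by (simp add: measurable_cong_sets)
qed

lemma measurable_mallows_list [measurable]:
  "(\<lambda>B. mallows_list B n) \<in> bern_array q \<rightarrow>\<^sub>M count_space UNIV"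
proof (induction n)
  case (Suc n)
  note Suc.IH[measurable]
  show ?case
    unfolding mallows_list.simps by measurable
qed simp

lemma sets_mallows_list_event:
  "{B \<in> space (bern_array q). P (mallows_list B n)} \<in> sets (bern_array q)"
  by measurable

text \<open>When the first values of the Mallows permutation are \<open>a\<close>, the trials \<open>B (i, j)\<close> inspected
  are those with \<open>(i, j) \<in> trials a\<close>, and exactly the one at \<open>j = a ! (i - 1)\<close> succeeds.\<close>
definition trials :: "nat list \<Rightarrow> (nat \<times> nat) set" where
  "trials a = {(Suc i, j) | i j. i < length a \<and> 1 \<le> j \<and> j \<le> a ! i \<and> j \<notin> set (take i a)}"

definition trial_outcome :: "nat list \<Rightarrow> nat \<times> nat \<Rightarrow> bool" where
  "trial_outcome a x \<longleftrightarrow> snd x = a ! (fst x - 1)"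

definition cylinder :: "nat list \<Rightarrow> (nat \<times> nat \<Rightarrow> bool) set" where
  "cylinder a = {B. \<forall>x\<in>trials a. B x = trial_outcome a x}"

lemma finite_trials: "finite (trials a)"
proof (rule finite_subset)
  show "trials a \<subseteq> {..length a} \<times> {..sum_list a}"
    unfolding trials_def using elem_le_sum_list[of _ a] by fastforce
qed simp

lemma trials_snoc: "trials (a @ [v]) = trials a \<union> (\<lambda>j. (Suc (length a), j)) ` ({1..v} - set a)"
  unfolding trials_def by (auto simp: nth_append less_Suc_eq)

lemma trial_outcome_snoc: "x \<in> trials a \<Longrightarrow> trial_outcome (a @ [v]) x = trial_outcome a x"
  unfolding trials_def trial_outcome_def by (auto simp: nth_append)

lemma mallows_list_cylinder:
  assumes "distinct a" "0 \<notin> set a" "B \<in> cylinder a"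
  shows "mallows_list B (length a) = a"
  using assms
proof (induction a rule: rev_induct)
  case (snoc v a)
  then have a: "distinct a" "0 \<notin> set a" "v \<notin> set a" "1 \<le> v"
    by auto
  have "B \<in> cylinder a"
    using snoc.prems(3) by (auto simp: cylinder_def trials_snoc trial_outcome_snoc)
  then have prefix: "mallows_list B (length a) = a"
    using snoc.IH a by simp
  have new: "B (Suc (length a), j) \<longleftrightarrow> j = v" if "j \<in> {1..v} - set a" for j
    using snoc.prems(3) that by (auto simp: cylinder_def trials_snoc trial_outcome_def)
  have "(LEAST j. 1 \<le> j \<and> j \<notin> set a \<and> B (Suc (length a), j)) = v"
  proof (rule Least_equality)
    show "1 \<le> v \<and> v \<notin> set a \<and> B (Suc (length a), v)"
      using a new[of v] by auto
  next
    fix j assume "1 \<le> j \<and> j \<notin> set a \<and> B (Suc (length a), j)"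
    then show "v \<le> j"
      using new[of j] by (cases "j \<le> v") auto
  qed
  then show ?case
    using prefix by simp
qed simp

lemma mallows_list_cylinder_distinct_lists:
  assumes "a \<in> distinct_lists M N" "B \<in> cylinder a"
  shows "mallows_list B N = a"
  using mallows_list_cylinder[OF distinct_listsD(1,2)[OF assms(1)] assms(2)]
  by (simp add: distinct_listsD(3)[OF assms(1)])

lemma disjoint_family_on_cylinder: "disjoint_family_on cylinder (distinct_lists M N)"
  unfolding disjoint_family_on_def
proof (intro ballI impI, rule ccontr)
  fix a b assume ab: "a \<in> distinct_lists M N" "b \<in> distinct_lists M N" "a \<noteq> b"
    and "cylinder a \<inter> cylinder b \<noteq> {}"
  then obtain B where "B \<in> cylinder a" "B \<in> cylinder b"
    by blast
  then have "mallows_list B N = a" "mallows_list B N = b"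
    using ab mallows_list_cylinder_distinct_lists by blast+
  then show False
    using ab(3) by simp
qed

lemma sets_cylinder [measurable]: "cylinder a \<in> sets (bern_array q)"
proof -
  have "cylinder a
      = (\<Inter>x\<in>trials a. {B \<in> space (bern_array q). B x = trial_outcome a x}) \<inter> space (bern_array q)"
    unfolding cylinder_def by auto
  also have "\<dots> \<in> sets (bern_array q)"
    using finite_trials by measurable
  finally show ?thesis .
qed

lemma prod_trial_outcome:
  fixes q :: real
  assumes "0 \<le> q" "q \<le> 1" "distinct a" "0 \<notin> set a"
  shows "(\<Prod>x\<in>trials a. pmf (bernoulli_pmf (1 - q)) (trial_outcome a x))
         = (1 - q) ^ length a * q ^ rejections a"
  using assms(3,4)
proof (induction a rule: rev_induct)
  case Nil
  then show ?case by (simp add: trials_def rejections_def)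
next
  case (snoc v a)
  then have a: "distinct a" "0 \<notin> set a" "v \<notin> set a" "1 \<le> v"
    by auto
  let ?p = "pmf (bernoulli_pmf (1 - q))"
  let ?new = "(\<lambda>j. (Suc (length a), j)) ` ({1..v} - set a)"
  have "trials a \<inter> ?new = {}"
    unfolding trials_def by auto
  then have "(\<Prod>x\<in>trials (a @ [v]). ?p (trial_outcome (a @ [v]) x))
      = (\<Prod>x\<in>trials a. ?p (trial_outcome a x)) * (\<Prod>x\<in>?new. ?p (trial_outcome (a @ [v]) x))"
    unfolding trials_snoc using finite_trials
    by (simp add: prod.union_disjoint trial_outcome_snoc cong: prod.cong)
  also have "(\<Prod>x\<in>?new. ?p (trial_outcome (a @ [v]) x)) = (\<Prod>j\<in>{1..v} - set a. ?p (j = v))"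
    by (subst prod.reindex) (auto simp: inj_on_def trial_outcome_def)
  also have "\<dots> = ?p True * (\<Prod>j\<in>{1..<v} - set a. ?p False)"
  proof -
    have "{1..v} - set a = insert v ({1..<v} - set a)"
      using a by auto
    moreover have "(\<Prod>j\<in>{1..<v} - set a. ?p (j = v)) = (\<Prod>j\<in>{1..<v} - set a. ?p False)"
      by (intro prod.cong) auto
    ultimately show ?thesis
      by simp
  qed
  also have "\<dots> = (1 - q) * q ^ card ({1..<v} - set a)"
    using assms(1,2) by simp
  finally show ?case
    using snoc.IH a by (simp add: rejections_snoc power_add)
qed

lemma measure_cylinder:
  fixes q :: real
  assumes "0 \<le> q" "q \<le> 1" "distinct a" "0 \<notin> set a"
  shows "measure (bern_array q) (cylinder a) = (1 - q) ^ length a * q ^ rejections a"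
proof -
  let ?M = "\<lambda>_::nat \<times> nat. measure_pmf (bernoulli_pmf (1 - q))"
  have "cylinder a = prod_emb UNIV ?M (trials a) (\<Pi>\<^sub>E x\<in>trials a. {trial_outcome a x})"
    by (auto simp: cylinder_def prod_emb_iff restrict_PiE_iff extensional_def)
  then have "emeasure (bern_array q) (cylinder a)
      = (\<Prod>x\<in>trials a. emeasure (?M x) {trial_outcome a x})"
    unfolding bern_array_def
    by (simp only:) (rule emeasure_PiM_emb; simp add: prob_space_measure_pmf finite_trials)
  also have "\<dots> = ennreal ((1 - q) ^ length a * q ^ rejections a)"
    using prod_trial_outcome[OF assms] by (simp add: emeasure_pmf_single prod_ennreal)
  finally show ?thesis
    using assms(1,2) by (simp add: measure_def)
qed

section \<open>The law of the pattern of the first values\<close>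

lemma measure_mallows_list_lower_bound:
  fixes q :: real
  assumes q: "0 \<le> q" "q < 1"
    and invariant: "order_invariant Q"
  shows "(1 - q) ^ N * (\<Sum>a\<in>distinct_lists M N. q ^ rejections a) * pattern_prob q N Q
         \<le> measure (bern_array q) {B \<in> space (bern_array q). Q (mallows_list B N)}"
proof -
  interpret prob_space "bern_array q"
    by (rule prob_space_bern_array)
  let ?A = "{a \<in> distinct_lists M N. Q a}"
  let ?K = "\<Sum>S | S \<subseteq> {1..M} \<and> card S = N. q ^ gap_count S"
  have pattern_part:
    "(\<Sum>a\<in>distinct_lists M N. if Q a then q ^ rejections a else 0) = ?K * pattern_weight q N Q"
    by (rule sum_distinct_lists_rejections_factor[OF invariant])
  have "0 < pattern_weight q N (\<lambda>_. True)"
    using pattern_weight_True_ge_1[OF q(1)] by (rule less_le_trans[OF zero_less_one])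
  moreover have "(\<Sum>a\<in>distinct_lists M N. q ^ rejections a) = ?K * pattern_weight q N (\<lambda>_. True)"
    using sum_distinct_lists_rejections_factor[of "\<lambda>_. True" q M N]
    by (simp add: order_invariant_def)
  ultimately have "(1 - q) ^ N * (\<Sum>a\<in>distinct_lists M N. q ^ rejections a) * pattern_prob q N Q
      = (1 - q) ^ N * (?K * pattern_weight q N Q)"
    by (simp add: pattern_prob_def)
  also have "\<dots> = (1 - q) ^ N * (\<Sum>a\<in>distinct_lists M N. if Q a then q ^ rejections a else 0)"
    by (simp only: pattern_part)
  also have "\<dots> = (\<Sum>a\<in>?A. (1 - q) ^ N * q ^ rejections a)"
    by (auto simp: sum.inter_filter finite_distinct_lists sum_distrib_left intro!: sum.cong)
  also have "\<dots> = (\<Sum>a\<in>?A. measure (bern_array q) (cylinder a))"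
  proof (rule sum.cong[OF refl])
    fix a assume "a \<in> ?A"
    then have "a \<in> distinct_lists M N"
      by simp
    then show "(1 - q) ^ N * q ^ rejections a = measure (bern_array q) (cylinder a)"
      using q distinct_listsD[of a M N] by (simp add: measure_cylinder)
  qed
  also have "\<dots> = measure (bern_array q) (\<Union>a\<in>?A. cylinder a)"
    using disjoint_family_on_mono[OF _ disjoint_family_on_cylinder, of ?A M N]
    by (intro measure_finite_Union[symmetric]) (auto simp: finite_distinct_lists)
  also have "\<dots> \<le> measure (bern_array q) {B \<in> space (bern_array q). Q (mallows_list B N)}"
    using mallows_list_cylinder_distinct_lists
    by (intro finite_measure_mono sets_mallows_list_event) auto
  finally show ?thesis .
qed

lemma tendsto_distinct_lists_mass:
  fixes q :: real
  assumes "0 \<le> q" "q < 1"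
  shows "(\<lambda>M. (1 - q) ^ N * (\<Sum>a\<in>distinct_lists M N. q ^ rejections a)) \<longlonglongrightarrow> 1"
proof -
  have "(\<lambda>m. \<Sum>i<m. q ^ i) \<longlonglongrightarrow> 1 / (1 - q)"
    using geometric_sums[of q] assms by (simp add: sums_def)
  then have "(\<lambda>M. \<Prod>k<N. \<Sum>i<M - k. q ^ i) \<longlonglongrightarrow> (\<Prod>k<N. 1 / (1 - q))"
    by (intro tendsto_prod seq_offset_neg)
  then have "(\<lambda>M. (1 - q) ^ N * (\<Prod>k<N. \<Sum>i<M - k. q ^ i)) \<longlonglongrightarrow> (1 - q) ^ N * (1 / (1 - q)) ^ N"
    by (intro tendsto_mult tendsto_const) simp
  moreover have "(1 - q) ^ N * (1 / (1 - q)) ^ N = 1"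
    using assms by (simp add: power_one_over[symmetric] power_mult_distrib[symmetric])
  ultimately show ?thesis
    by (simp add: sum_rejections_distinct_lists)
qed

lemma pattern_prob_le_measure_mallows_list:
  fixes q :: real
  assumes q: "0 \<le> q" "q < 1"
    and invariant: "order_invariant Q"
  shows "pattern_prob q N Q
         \<le> measure (bern_array q) {B \<in> space (bern_array q). Q (mallows_list B N)}"
proof -
  have "(\<lambda>M. (1 - q) ^ N * (\<Sum>a\<in>distinct_lists M N. q ^ rejections a) * pattern_prob q N Q)
      \<longlonglongrightarrow> 1 * pattern_prob q N Q"
    by (intro tendsto_mult tendsto_distinct_lists_mass[OF q] tendsto_const)
  moreover have "\<forall>M. (1 - q) ^ N * (\<Sum>a\<in>distinct_lists M N. q ^ rejections a) * pattern_prob q N Q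
      \<le> measure (bern_array q) {B \<in> space (bern_array q). Q (mallows_list B N)}"
    using measure_mallows_list_lower_bound[OF q invariant] by blast
  ultimately have "1 * pattern_prob q N Q
      \<le> measure (bern_array q) {B \<in> space (bern_array q). Q (mallows_list B N)}"
    by (rule tendsto_upperbound[OF _ always_eventually]) simp
  then show ?thesis
    by simp
qed

lemma measure_mallows_list_eq_pattern_prob:
  fixes q :: real
  assumes q: "0 \<le> q" "q < 1"
    and invariant: "order_invariant Q"
  shows "measure (bern_array q) {B \<in> space (bern_array q). Q (mallows_list B N)}
         = pattern_prob q N Q"
proof -
  interpret prob_space "bern_array q"
    by (rule prob_space_bern_array)
  have "order_invariant (\<lambda>\<tau>. \<not> Q \<tau>)"
    using invariant by (simp add: order_invariant_def)
  then have "pattern_prob q N (\<lambda>\<tau>. \<not> Q \<tau>)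
      \<le> measure (bern_array q) {B \<in> space (bern_array q). \<not> Q (mallows_list B N)}"
    by (rule pattern_prob_le_measure_mallows_list[OF q])
  then have "1 - pattern_prob q N Q
      \<le> measure (bern_array q) {B \<in> space (bern_array q). \<not> Q (mallows_list B N)}"
    by (simp only: pattern_prob_Not[OF q(1)])
  also have "\<dots> = 1 - measure (bern_array q) {B \<in> space (bern_array q). Q (mallows_list B N)}"
    using prob_compl[OF sets_mallows_list_event] by (simp add: set_diff_eq)
  finally show ?thesis
    using pattern_prob_le_measure_mallows_list[OF q invariant, of N] by simp
qed

section \<open>Convergence of the balls\<close>

lemma eventually_incseq_Int_eq:
  fixes V :: "nat \<Rightarrow> 'a set"
  assumes "incseq V" "finite ((\<Union>n. V n) \<inter> A)"
  shows "eventually (\<lambda>n. V n \<inter> A = (\<Union>n. V n) \<inter> A) sequentially"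
proof -
  have "eventually (\<lambda>n. x \<in> V n) sequentially" if x: "x \<in> (\<Union>n. V n) \<inter> A" for x
  proof -
    obtain m where "x \<in> V m"
      using x by blast
    then show ?thesis
      using incseqD[OF assms(1)] unfolding eventually_sequentially by blast
  qed
  then have "eventually (\<lambda>n. \<forall>x\<in>(\<Union>n. V n) \<inter> A. x \<in> V n) sequentially"
    using assms(2) by (simp add: eventually_ball_finite)
  then show ?thesis
    by (rule eventually_mono) blast
qed

lemma (in finite_measure) tendsto_measure_eventually_eq:
  assumes sets: "\<And>n. A n \<in> sets M" and "B \<subseteq> space M"
    and eventually_eq: "\<And>x. x \<in> space M \<Longrightarrow> eventually (\<lambda>n. x \<in> A n \<longleftrightarrow> x \<in> B) sequentially"
  shows "(\<lambda>n. measure M (A n)) \<longlonglongrightarrow> measure M B"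
proof -
  have indicator_lim: "(\<lambda>n. indicator (A n) x) \<longlonglongrightarrow> (indicator B x :: real)" if "x \<in> space M" for x
    using eventually_eq[OF that]
    by (intro tendsto_eventually, elim eventually_mono) (simp add: indicator_def)
  have "(indicator B :: _ \<Rightarrow> real) \<in> borel_measurable M"
    by (rule borel_measurable_LIMSEQ_real[where u = "\<lambda>n. indicator (A n)"])
      (auto intro: indicator_lim borel_measurable_indicator sets)
  then have B: "B \<in> sets M"
    using \<open>B \<subseteq> space M\<close> by (simp add: borel_measurable_indicator_iff Int_absorb2)
  have "(\<lambda>n. integral\<^sup>L M (indicator (A n) :: _ \<Rightarrow> real)) \<longlonglongrightarrow> integral\<^sup>L M (indicator B)"
    using sets B indicator_lim
    by (intro integral_dominated_convergence[where w = "\<lambda>_. 1"]) (auto simp: indicator_def)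
  then show ?thesis
    using sets B by (simp add: Int_absorb2 sets.sets_into_space)
qed

lemma prefix_closed_bst_inf: "prefix_closed (bst_inf B)"
  using prefix_closed_bst unfolding prefix_closed_def bst_inf_def by blast

lemma eventually_bst_mallows_list_eq:
  "eventually (\<lambda>n. bst (mallows_list B n) \<inter> {w. length w \<le> r} = bst_inf B \<inter> {w. length w \<le> r})
     sequentially"
proof -
  have "incseq (\<lambda>n. bst (mallows_list B n))"
    by (rule incseq_SucI) (simp add: bst_subset_bst_append)
  moreover have "finite (bst_inf B \<inter> {w. length w \<le> r})"
    using finite_lists_length_le[of "UNIV :: bool set" r] by (auto intro: finite_subset)
  ultimately show ?thesis
    using eventually_incseq_Int_eq unfolding bst_inf_def by blast
qed

lemma order_invariant_bst: "order_invariant (\<lambda>xs. P (bst xs))"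
  by (simp add: order_invariant_def bst_map_strict_mono)

lemma tendsto_measure_bst_mallows_list:
  assumes depends_on_ball: "\<And>V V'. prefix_closed V \<Longrightarrow> prefix_closed V' \<Longrightarrow>
      V \<inter> {w. length w \<le> r} = V' \<inter> {w. length w \<le> r} \<Longrightarrow> P V \<longleftrightarrow> P V'"
  shows "(\<lambda>n. measure (bern_array q) {B \<in> space (bern_array q). P (bst (mallows_list B n))})
           \<longlonglongrightarrow> measure (bern_array q) {B \<in> space (bern_array q). P (bst_inf B)}"
proof -
  interpret prob_space "bern_array q"
    by (rule prob_space_bern_array)
  have "eventually (\<lambda>n. P (bst (mallows_list B n)) \<longleftrightarrow> P (bst_inf B)) sequentially" for B
    using eventually_bst_mallows_list_eq[of B r]
    by (rule eventually_mono) (intro depends_on_ball prefix_closed_bst prefix_closed_bst_inf)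
  then show ?thesis
    by (intro tendsto_measure_eventually_eq sets_mallows_list_event) auto
qed

theorem theorem1p3:
  fixes q :: real and r :: nat and T :: "'a set" and E :: "('a \<times> 'a) set" and \<rho> :: 'a
  assumes "0 \<le> q" and "q < 1" and "1 \<le> r"
    and "finite_rooted_tree T E \<rho>"
  shows "(\<lambda>n. mallows_prob q n (\<lambda>\<sigma>. ball_iso r [] (bst_perm n \<sigma>) T E \<rho>))
           \<longlonglongrightarrow> measure (bern_array q) {B \<in> space (bern_array q). ball_iso r [] (bst_inf B) T E \<rho>}"
proof -
  \<comment> \<open>The argument works for any property of the ball of radius \<open>r\<close> at the root.\<close>
  let ?P = "\<lambda>V. ball_iso r [] V T E \<rho>"
  have "mallows_prob q n (\<lambda>\<sigma>. ?P (bst_perm n \<sigma>))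
      = measure (bern_array q) {B \<in> space (bern_array q). ?P (bst (mallows_list B n))}" for n
    using mallows_prob_eq_pattern_prob[of q n "\<lambda>xs. ?P (bst xs)"]
      measure_mallows_list_eq_pattern_prob[OF assms(1,2) order_invariant_bst, of ?P n]
    by (simp add: bst_perm_def)
  moreover have "(\<lambda>n. measure (bern_array q) {B \<in> space (bern_array q). ?P (bst (mallows_list B n))})
      \<longlonglongrightarrow> measure (bern_array q) {B \<in> space (bern_array q). ?P (bst_inf B)}"
    by (intro tendsto_measure_bst_mallows_list ball_iso_root_cong)
  ultimately show ?thesis
    by simp
qed

end
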